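(* Let $n_1,\dots,n_m$ be positive integers, $n=\prod_{j=1}^m n_j$, and $\Omega=\times_{j=1}^m\overline{\mathbb{C}}^{n_j}$ where $\overline{\mathbb{C}}^{k}=\{x\in\mathbb{C}^k: x^\dagger x=1\}$. Let $\tilde\rho$ be an $n\times n$ density matrix (Hermitian, positive semidefinite, trace one) and let $$\mathscr{C}=\{g(x_1,\dots,x_m)=(\otimes_{j=1}^m x_j)^\dagger G(\otimes_{j=1}^m x_j)\ :\ G \text{ an } n\times n \text{ Hermitian matrix},\ \operatorname{Tr}(G\tilde\rho)\ge 0\}.$$ Let $\mathcal{L}^{\geq}$ denote the set of all bounded real-valued functions $h$ on $\Omega$ with $\inf h\ge 0$. Then the following are equivalent: (1) $\tilde\rho$ is entangled; (2) $\operatorname{posi}(\mathscr{C}\cup\mathcal{L}^{\geq})$ is not coherent, i.e. it contains a function $f$ on $\Omega$ with $\sup f<0$.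
   Context: $\operatorname{posi}$ denotes the conic hull (all finite nonnegative linear combinations). A density matrix on $\mathbb{C}^{n}=\otimes_j\mathbb{C}^{n_j}$ is separable if it is a convex combination of product density matrices $\rho_1\otimes\cdots\otimes\rho_m$ with $\rho_j$ a density matrix on $\mathbb{C}^{n_j}$, and entangled otherwise. *)

theory Defs
  imports "HOL-Analysis.Analysis"
begin

definition hermitian_on :: "'i set \<Rightarrow> ('i \<Rightarrow> 'i \<Rightarrow> complex) \<Rightarrow> bool" where
  "hermitian_on I A \<longleftrightarrow> (\<forall>i\<in>I. \<forall>k\<in>I. A k i = cnj (A i k))"

definition psd_on :: "'i set \<Rightarrow> ('i \<Rightarrow> 'i \<Rightarrow> complex) \<Rightarrow> bool" where
  "psd_on I A \<longleftrightarrow> (\<forall>v :: 'i \<Rightarrow> complex.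
      0 \<le> Re (\<Sum>i\<in>I. \<Sum>k\<in>I. cnj (v i) * A i k * v k))"

definition trace_on :: "'i set \<Rightarrow> ('i \<Rightarrow> 'i \<Rightarrow> complex) \<Rightarrow> complex" where
  "trace_on I A = (\<Sum>i\<in>I. A i i)"

definition density_on :: "'i set \<Rightarrow> ('i \<Rightarrow> 'i \<Rightarrow> complex) \<Rightarrow> bool" where
  "density_on I A \<longleftrightarrow> hermitian_on I A \<and> psd_on I A \<and> trace_on I A = 1"

text \<open>Multi-indices for the tensor product of C^(ns 0), ..., C^(ns (m-1)):
  index set of size prod_{j<m} ns j.\<close>

definition MI :: "(nat \<Rightarrow> nat) \<Rightarrow> nat \<Rightarrow> (nat \<Rightarrow> nat) set" where
  "MI ns m = {i. (\<forall>j<m. i j < ns j) \<and> (\<forall>j\<ge>m. i j = 0)}"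

definition tensor_mat :: "nat \<Rightarrow> (nat \<Rightarrow> nat \<Rightarrow> nat \<Rightarrow> complex) \<Rightarrow> (nat \<Rightarrow> nat) \<Rightarrow> (nat \<Rightarrow> nat) \<Rightarrow> complex" where
  "tensor_mat m \<sigma> i l = (\<Prod>j<m. \<sigma> j (i j) (l j))"

definition tensor_vec :: "nat \<Rightarrow> (nat \<Rightarrow> nat \<Rightarrow> complex) \<Rightarrow> (nat \<Rightarrow> nat) \<Rightarrow> complex" where
  "tensor_vec m x i = (\<Prod>j<m. x j (i j))"

definition separable :: "(nat \<Rightarrow> nat) \<Rightarrow> nat \<Rightarrow> ((nat \<Rightarrow> nat) \<Rightarrow> (nat \<Rightarrow> nat) \<Rightarrow> complex) \<Rightarrow> bool" where
  "separable ns m \<rho> \<longleftrightarrow> (\<exists>(K::nat) (p :: nat \<Rightarrow> real) (\<sigma> :: nat \<Rightarrow> nat \<Rightarrow> nat \<Rightarrow> nat \<Rightarrow> complex).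
      (\<forall>k<K. 0 \<le> p k) \<and> (\<Sum>k<K. p k) = 1 \<and>
      (\<forall>k<K. \<forall>j<m. density_on {..<ns j} (\<sigma> k j)) \<and>
      (\<forall>i\<in>MI ns m. \<forall>l\<in>MI ns m. \<rho> i l = (\<Sum>k<K. complex_of_real (p k) * tensor_mat m (\<sigma> k) i l)))"

definition entangled :: "(nat \<Rightarrow> nat) \<Rightarrow> nat \<Rightarrow> ((nat \<Rightarrow> nat) \<Rightarrow> (nat \<Rightarrow> nat) \<Rightarrow> complex) \<Rightarrow> bool" where
  "entangled ns m \<rho> \<longleftrightarrow> density_on (MI ns m) \<rho> \<and> \<not> separable ns m \<rho>"

definition Omega :: "(nat \<Rightarrow> nat) \<Rightarrow> nat \<Rightarrow> (nat \<Rightarrow> nat \<Rightarrow> complex) set" where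
  "Omega ns m = {x. (\<forall>j<m. (\<Sum>k<ns j. (cmod (x j k))\<^sup>2) = 1 \<and> (\<forall>k\<ge>ns j. x j k = 0))
                    \<and> (\<forall>j\<ge>m. \<forall>k. x j k = 0)}"

text \<open>The function g(x) = (tensor x)^dagger G (tensor x) (real since G is Hermitian).\<close>
definition gfun :: "(nat \<Rightarrow> nat) \<Rightarrow> nat \<Rightarrow> ((nat \<Rightarrow> nat) \<Rightarrow> (nat \<Rightarrow> nat) \<Rightarrow> complex)
    \<Rightarrow> (nat \<Rightarrow> nat \<Rightarrow> complex) \<Rightarrow> real" where
  "gfun ns m G x = Re (\<Sum>i\<in>MI ns m. \<Sum>l\<in>MI ns m.
      cnj (tensor_vec m x i) * G i l * tensor_vec m x l)"

definition Cset :: "(nat \<Rightarrow> nat) \<Rightarrow> nat \<Rightarrow> ((nat \<Rightarrow> nat) \<Rightarrow> (nat \<Rightarrow> nat) \<Rightarrow> complex)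
    \<Rightarrow> ((nat \<Rightarrow> nat \<Rightarrow> complex) \<Rightarrow> real) set" where
  "Cset ns m \<rho> = {gfun ns m G | G. hermitian_on (MI ns m) G \<and>
      0 \<le> Re (\<Sum>i\<in>MI ns m. \<Sum>l\<in>MI ns m. G i l * \<rho> l i)}"

definition Lge :: "(nat \<Rightarrow> nat) \<Rightarrow> nat \<Rightarrow> ((nat \<Rightarrow> nat \<Rightarrow> complex) \<Rightarrow> real) set" where
  "Lge ns m = {h. bounded (h ` Omega ns m) \<and> 0 \<le> (INF x\<in>Omega ns m. h x)}"

definition posi_on :: "'a set \<Rightarrow> ('a \<Rightarrow> real) set \<Rightarrow> ('a \<Rightarrow> real) set" where
  "posi_on \<Omega> S = {f. \<exists>(N::nat) (c :: nat \<Rightarrow> real) (h :: nat \<Rightarrow> 'a \<Rightarrow> real).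
      (\<forall>k<N. 0 \<le> c k \<and> h k \<in> S) \<and> (\<forall>x\<in>\<Omega>. f x = (\<Sum>k<N. c k * h k x))}"

end

theory Submission
  imports Defs "HOL-Library.FuncSet" "HOL-Combinatorics.Transposition"
begin

(* Separable states are the convex combinations of the product states |x><x| with x in Omega,
   and g(x) is the pairing of G with |x><x|. Hence if rho is separable, Tr(G rho) is an average
   of values of g on Omega; since every function in the cone dominates some g with
   Tr(G rho) >= 0, its supremum is nonnegative. Conversely, the product states are a continuous
   image of the compact set Omega in a finite-dimensional real space, so by Caratheodory their
   convex hull is closed. If rho lies outside it, a separating Hermitian W has g >= 0 on Omega
   but Tr(W rho) = -delta < 0, and then G = -W - delta I satisfies Tr(G rho) = 0 while its
   function is at most -delta on Omega. *)

section \<open>Matrices on finite index sets\<close>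

lemma bij_betw_PiE_MI:
  "bij_betw (\<lambda>g j. if j < m then g j else 0) (PiE {..<m} (\<lambda>j. {..<ns j})) (MI ns m)"
  by (rule bij_betw_byWitness[where f' = "\<lambda>i. restrict i {..<m}"])
    (auto simp: MI_def PiE_def extensional_def fun_eq_iff)

lemma finite_MI: "finite (MI ns m)"
  using bij_betw_finite[OF bij_betw_PiE_MI[of m ns]] by (simp add: finite_PiE)

lemma sum_MI_prod:
  fixes a :: "nat \<Rightarrow> nat \<Rightarrow> 'c::comm_semiring_1"
  shows "(\<Sum>i\<in>MI ns m. \<Prod>j<m. a j (i j)) = (\<Prod>j<m. \<Sum>k<ns j. a j k)"
proof -
  have "(\<Prod>j<m. \<Sum>k<ns j. a j k) = (\<Sum>g\<in>PiE {..<m} (\<lambda>j. {..<ns j}). \<Prod>j<m. a j (g j))"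
    by (rule prod_sum_PiE) auto
  also have "\<dots> = (\<Sum>g\<in>PiE {..<m} (\<lambda>j. {..<ns j}). \<Prod>j<m. a j (if j < m then g j else 0))"
    by (intro sum.cong prod.cong) auto
  also have "\<dots> = (\<Sum>i\<in>MI ns m. \<Prod>j<m. a j (i j))"
    by (rule sum.reindex_bij_betw[OF bij_betw_PiE_MI])
  finally show ?thesis by simp
qed

definition quad_form_on :: "'i set \<Rightarrow> ('i \<Rightarrow> 'i \<Rightarrow> complex) \<Rightarrow> ('i \<Rightarrow> complex) \<Rightarrow> complex" where
  "quad_form_on I A v = (\<Sum>i\<in>I. \<Sum>k\<in>I. cnj (v i) * A i k * v k)"

definition trace_prod_on :: "'i set \<Rightarrow> ('i \<Rightarrow> 'i \<Rightarrow> complex) \<Rightarrow> ('i \<Rightarrow> 'i \<Rightarrow> complex) \<Rightarrow> complex" where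
  "trace_prod_on I A B = (\<Sum>i\<in>I. \<Sum>l\<in>I. A i l * B l i)"

definition outer :: "('i \<Rightarrow> complex) \<Rightarrow> 'i \<Rightarrow> 'i \<Rightarrow> complex" where
  "outer v i l = v i * cnj (v l)"

lemma quad_form_on_cong: "(\<And>i. i \<in> I \<Longrightarrow> v i = u i) \<Longrightarrow> quad_form_on I A v = quad_form_on I A u"
  by (simp add: quad_form_on_def)

lemma trace_prod_on_cong:
  "(\<And>i l. i \<in> I \<Longrightarrow> l \<in> I \<Longrightarrow> B i l = B' i l) \<Longrightarrow> trace_prod_on I A B = trace_prod_on I A B'"
  by (simp add: trace_prod_on_def)

lemma psd_on_cong: "(\<And>i k. i \<in> I \<Longrightarrow> k \<in> I \<Longrightarrow> A i k = B i k) \<Longrightarrow> psd_on I A \<longleftrightarrow> psd_on I B"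
  by (simp add: psd_on_def)

lemma psd_on_iff_quad_form: "psd_on I A \<longleftrightarrow> (\<forall>v. 0 \<le> Re (quad_form_on I A v))"
  by (simp add: psd_on_def quad_form_on_def)

lemma quad_form_on_eq_trace_prod: "quad_form_on I A v = trace_prod_on I A (outer v)"
  unfolding quad_form_on_def trace_prod_on_def outer_def by (intro sum.cong refl) (simp add: mult_ac)

lemma gfun_eq_quad_form: "gfun ns m G x = Re (quad_form_on (MI ns m) G (tensor_vec m x))"
  by (simp add: gfun_def quad_form_on_def)

lemma trace_on_outer: "trace_on I (outer v) = of_real (\<Sum>i\<in>I. (cmod (v i))\<^sup>2)"
  unfolding trace_on_def outer_def of_real_sum complex_norm_square ..

lemma quad_form_on_outer: "quad_form_on I (outer u) v = of_real ((cmod (\<Sum>i\<in>I. cnj (v i) * u i))\<^sup>2)"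
proof -
  have "quad_form_on I (outer u) v = (\<Sum>i\<in>I. cnj (v i) * u i) * cnj (\<Sum>k\<in>I. cnj (v k) * u k)"
    unfolding quad_form_on_def outer_def cnj_sum sum_product by (intro sum.cong refl) (simp add: mult_ac)
  then show ?thesis by (simp only: complex_norm_square)
qed

lemma density_on_outer:
  assumes "(\<Sum>i\<in>I. (cmod (v i))\<^sup>2) = 1"
  shows "density_on I (outer v)"
  using assms by (simp add: density_on_def hermitian_on_def psd_on_iff_quad_form quad_form_on_outer
      trace_on_outer) (simp add: outer_def)

lemma trace_prod_on_sum_left:
  "trace_prod_on I (\<lambda>i l. \<Sum>k\<in>K. c k * G k i l) M = (\<Sum>k\<in>K. c k * trace_prod_on I (G k) M)"
  unfolding trace_prod_on_def sum_distrib_left sum_distrib_right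
  by (subst sum.swap, rule sum.cong[OF refl], subst sum.swap) (simp add: mult_ac)

lemma trace_prod_on_sum_right:
  "trace_prod_on I H (\<lambda>i l. \<Sum>k\<in>K. c k * M k i l) = (\<Sum>k\<in>K. c k * trace_prod_on I H (M k))"
  unfolding trace_prod_on_def sum_distrib_left sum_distrib_right
  by (subst sum.swap, rule sum.cong[OF refl], subst sum.swap) (simp add: mult_ac)

lemma trace_prod_on_diff_scalar:
  assumes "finite I"
  shows "trace_prod_on I (\<lambda>i l. A i l - (if i = l then d else 0)) M
    = trace_prod_on I A M - d * trace_on I M"
  using assms by (simp add: trace_prod_on_def trace_on_def left_diff_distrib sum_subtractf
      if_distrib[of "\<lambda>x. x * _"] sum_distrib_left cong: if_cong)

lemma gfun_sum: "gfun ns m (\<lambda>i l. \<Sum>k\<in>K. of_real (c k) * G k i l) x = (\<Sum>k\<in>K. c k * gfun ns m (G k) x)"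
  by (simp add: gfun_eq_quad_form quad_form_on_eq_trace_prod trace_prod_on_sum_left Re_sum)

section \<open>Factorization of positive semidefinite matrices\<close>

lemma quad_form_on_insert:
  assumes "finite J" "a \<notin> J"
  shows "quad_form_on (insert a J) A v = cnj (v a) * A a a * v a + cnj (v a) * (\<Sum>k\<in>J. A a k * v k)
     + (\<Sum>i\<in>J. cnj (v i) * A i a) * v a + quad_form_on J A v"
proof -
  have "quad_form_on (insert a J) A v = (\<Sum>k\<in>insert a J. cnj (v a) * A a k * v k)
      + (\<Sum>i\<in>J. cnj (v i) * A i a * v a) + quad_form_on J A v"
    using assms by (simp add: quad_form_on_def sum.distrib)
  then show ?thesis
    using assms by (simp add: sum_distrib_left sum_distrib_right mult.assoc)
qed

lemma quad_form_on_two_point: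
  assumes "finite I" "a \<in> I" "b \<in> I" "a \<noteq> b"
  shows "quad_form_on I A (\<lambda>i. if i = a then s else if i = b then t else 0) =
    cnj s * A a a * s + cnj s * A a b * t + cnj t * A b a * s + cnj t * A b b * t"
proof -
  let ?v = "\<lambda>i. if i = a then s else if i = b then t else 0"
  have inner: "(\<Sum>k\<in>I. cnj (?v i) * A i k * ?v k) = (\<Sum>k\<in>{a, b}. cnj (?v i) * A i k * ?v k)" for i
    by (rule sum.mono_neutral_right) (use assms in auto)
  have "quad_form_on I A ?v = (\<Sum>i\<in>{a, b}. \<Sum>k\<in>{a, b}. cnj (?v i) * A i k * ?v k)"
    unfolding quad_form_on_def inner by (rule sum.mono_neutral_right) (use assms in auto)
  then show ?thesis using assms by (simp add: algebra_simps)
qed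

lemma psd_on_subset:
  assumes "psd_on I A" "J \<subseteq> I" "finite I"
  shows "psd_on J A"
  unfolding psd_on_iff_quad_form
proof
  fix v :: "_ \<Rightarrow> complex"
  let ?u = "\<lambda>i. if i \<in> J then v i else 0"
  have inner: "(\<Sum>k\<in>I. cnj (?u i) * A i k * ?u k) = (\<Sum>k\<in>J. cnj (?u i) * A i k * ?u k)" for i
    by (rule sum.mono_neutral_right) (use assms(2,3) in auto)
  have "quad_form_on I A ?u = (\<Sum>i\<in>J. \<Sum>k\<in>J. cnj (?u i) * A i k * ?u k)"
    unfolding quad_form_on_def inner by (rule sum.mono_neutral_right) (use assms(2,3) in auto)
  also have "\<dots> = quad_form_on J A v"
    unfolding quad_form_on_def by (intro sum.cong) auto
  finally show "0 \<le> Re (quad_form_on J A v)"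
    using assms(1) by (metis psd_on_iff_quad_form)
qed

lemma psd_on_diag_nonneg:
  assumes "psd_on I A" "finite I" "a \<in> I"
  shows "0 \<le> Re (A a a)"
proof -
  have "psd_on {a} A"
    using psd_on_subset[OF assms(1) _ assms(2)] assms(3) by blast
  then have "0 \<le> Re (quad_form_on {a} A (\<lambda>_. 1))"
    unfolding psd_on_iff_quad_form by blast
  then show ?thesis
    by (simp add: quad_form_on_def)
qed

lemma eq_0_if_linear_form_bounded_below:
  fixes z :: complex and c :: real
  assumes "\<And>s. 0 \<le> Re (cnj s * z + cnj z * s) + c"
  shows "z = 0"
proof (rule ccontr)
  assume "z \<noteq> 0"
  then have pos: "(cmod z)\<^sup>2 > 0" by simp
  have sq: "(cmod z)\<^sup>2 = Re z * Re z + Im z * Im z"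
    using cmod_power2[of z] by (simp add: power2_eq_square)
  define t where "t = - (\<bar>c\<bar> + 1) / (2 * (cmod z)\<^sup>2)"
  have "Re (cnj (of_real t * z) * z + cnj z * (of_real t * z)) = 2 * t * (cmod z)\<^sup>2"
    unfolding sq by (simp add: algebra_simps)
  also have "\<dots> = - (\<bar>c\<bar> + 1)"
    using pos by (simp add: t_def field_simps)
  finally show False
    using assms[of "of_real t * z"] by linarith
qed

lemma psd_on_row_zero:
  assumes "hermitian_on I A" "psd_on I A" "finite I" "a \<in> I" "k \<in> I" "A a a = 0"
  shows "A a k = 0"
proof (cases "k = a")
  case False
  have sym: "A k a = cnj (A a k)"
    using assms(1,4,5) unfolding hermitian_on_def by blast
  show ?thesis
  proof (rule eq_0_if_linear_form_bounded_below[where c = "Re (A k k)"])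
    fix s
    have "0 \<le> Re (quad_form_on I A (\<lambda>i. if i = a then s else if i = k then 1 else 0))"
      using assms(2) psd_on_iff_quad_form by blast
    also have "quad_form_on I A (\<lambda>i. if i = a then s else if i = k then 1 else 0)
        = cnj s * A a k + cnj (A a k) * s + A k k"
      unfolding quad_form_on_two_point[OF assms(3,4,5) False[symmetric]] sym assms(6) by simp
    finally show "0 \<le> Re (cnj s * A a k + cnj (A a k) * s) + Re (A k k)"
      by simp
  qed
qed (use assms(6) in simp)

lemma schur_complement_psd:
  assumes "finite J" "a \<notin> J" "hermitian_on (insert a J) A" "psd_on (insert a J) A"
    and pos: "0 < Re (A a a)"
  shows "psd_on J (\<lambda>i k. A i k - A i a * A a k / A a a)"
  unfolding psd_on_iff_quad_form
proof
  fix v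
  have herm: "A k i = cnj (A i k)" if "i \<in> insert a J" "k \<in> insert a J" for i k
    using assms(3) that unfolding hermitian_on_def by blast
  define \<alpha> where "\<alpha> = Re (A a a)"
  have Aaa: "A a a = of_real \<alpha>"
    using herm[of a a] by (simp add: \<alpha>_def complex_eq_iff)
  define \<beta> where "\<beta> = (\<Sum>k\<in>J. A a k * v k)"
  have col: "(\<Sum>i\<in>J. cnj (v i) * A i a) = cnj \<beta>"
    unfolding \<beta>_def cnj_sum using herm[of a] by (intro sum.cong refl) simp
  text \<open>Choosing the coordinate at a to complete the square.\<close>
  define u where "u = v(a := - \<beta> / of_real \<alpha>)"
  have u_J: "u i = v i" if "i \<in> J" for i
    using that assms(2) by (auto simp: u_def)
  have row: "(\<Sum>k\<in>J. A a k * u k) = \<beta>"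
    unfolding \<beta>_def by (intro sum.cong) (simp_all add: u_J)
  have col': "(\<Sum>i\<in>J. cnj (u i) * A i a) = cnj \<beta>"
    unfolding col[symmetric] by (intro sum.cong) (simp_all add: u_J)
  have "quad_form_on (insert a J) A u
      = cnj (u a) * A a a * u a + cnj (u a) * \<beta> + cnj \<beta> * u a + quad_form_on J A v"
    unfolding quad_form_on_insert[OF assms(1,2)] row col' using quad_form_on_cong[of J u v] u_J by simp
  also have "\<dots> = quad_form_on J A v - cnj \<beta> * \<beta> / of_real \<alpha>"
  proof -
    have ua: "u a = - \<beta> / of_real \<alpha>" "cnj (u a) = - cnj \<beta> / of_real \<alpha>"
      by (simp_all add: u_def)
    have "(of_real \<alpha> :: complex) \<noteq> 0"
      using pos by (simp add: \<alpha>_def)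
    then show ?thesis
      unfolding Aaa ua by (simp add: field_simps)
  qed
  also have "cnj \<beta> * \<beta> / of_real \<alpha> = (\<Sum>i\<in>J. cnj (v i) * A i a) * (\<Sum>k\<in>J. A a k * v k) / A a a"
    by (simp add: col \<beta>_def Aaa)
  also have "\<dots> = (\<Sum>i\<in>J. \<Sum>k\<in>J. cnj (v i) * (A i a * A a k / A a a) * v k)"
    unfolding sum_product sum_divide_distrib by (intro sum.cong refl) (simp add: mult_ac)
  also have "quad_form_on J A v - \<dots> = quad_form_on J (\<lambda>i k. A i k - A i a * A a k / A a a) v"
    by (simp add: quad_form_on_def algebra_simps sum_subtractf)
  finally show "0 \<le> Re (quad_form_on J (\<lambda>i k. A i k - A i a * A a k / A a a) v)"
    using assms(4) psd_on_iff_quad_form by metis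
qed

lemma psd_on_split_off_rank_one:
  assumes "finite J" "a \<notin> J" "hermitian_on (insert a J) A" "psd_on (insert a J) A"
  obtains w where "\<And>i k. i \<in> insert a J \<Longrightarrow> k \<in> insert a J \<Longrightarrow> i = a \<or> k = a \<Longrightarrow> A i k = w i * cnj (w k)"
    and "psd_on J (\<lambda>i k. A i k - w i * cnj (w k))"
proof -
  have fin: "finite (insert a J)" using assms(1) by simp
  have herm: "A k i = cnj (A i k)" if "i \<in> insert a J" "k \<in> insert a J" for i k
    using assms(3) that unfolding hermitian_on_def by blast
  define \<alpha> where "\<alpha> = Re (A a a)"
  have Aaa: "A a a = of_real \<alpha>"
    using herm[of a a] by (simp add: \<alpha>_def complex_eq_iff)
  have "0 \<le> \<alpha>"
    using psd_on_diag_nonneg[OF assms(4) fin] by (simp add: \<alpha>_def)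
  then consider "\<alpha> = 0" | "0 < \<alpha>" by linarith
  then show ?thesis
  proof cases
    case 1
    have row: "A a k = 0" if "k \<in> insert a J" for k
      using psd_on_row_zero[OF assms(3,4) fin _ that] Aaa 1 by simp
    show ?thesis
    proof (rule that[of "\<lambda>_. 0"])
      fix i k assume "i \<in> insert a J" "k \<in> insert a J" "i = a \<or> k = a"
      then show "A i k = 0 * cnj 0"
        using row herm[of a i] by auto
    next
      show "psd_on J (\<lambda>i k. A i k - 0 * cnj 0)"
        using psd_on_subset[OF assms(4) _ fin] by auto
    qed
  next
    case 2
    define w where "w i = A i a / of_real (sqrt \<alpha>)" for i
    have ww: "w i * cnj (w k) = A i a * A a k / A a a" if "k \<in> insert a J" for i k
    proof -
      have "(of_real (sqrt \<alpha>) :: complex) * of_real (sqrt \<alpha>) = A a a"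
        using 2 by (simp add: Aaa flip: of_real_mult)
      then show ?thesis
        using herm[of a k] that by (simp add: w_def)
    qed
    show ?thesis
    proof (rule that[of w])
      fix i k assume "i \<in> insert a J" "k \<in> insert a J" "i = a \<or> k = a"
      then show "A i k = w i * cnj (w k)"
        using ww 2 Aaa by auto
    next
      show "psd_on J (\<lambda>i k. A i k - w i * cnj (w k))"
        using schur_complement_psd[OF assms] 2 Aaa ww by (auto cong: psd_on_cong)
    qed
  qed
qed

lemma psd_factorization:
  assumes "finite I" "hermitian_on I A" "psd_on I A"
  shows "\<exists>V. \<forall>i\<in>I. \<forall>k\<in>I. A i k = (\<Sum>r\<in>I. V r i * cnj (V r k))"
  using assms
proof (induction I arbitrary: A rule: finite_induct)
  case (insert a J A)
  obtain w where w: "\<And>i k. i \<in> insert a J \<Longrightarrow> k \<in> insert a J \<Longrightarrow> i = a \<or> k = a \<Longrightarrow> A i k = w i * cnj (w k)"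
    and psd: "psd_on J (\<lambda>i k. A i k - w i * cnj (w k))"
    using psd_on_split_off_rank_one[OF insert.hyps(1,2) insert.prems] by blast
  have "hermitian_on J (\<lambda>i k. A i k - w i * cnj (w k))"
    unfolding hermitian_on_def
  proof (intro ballI)
    fix i k assume "i \<in> J" "k \<in> J"
    then have "A k i = cnj (A i k)"
      using insert.prems(1) unfolding hermitian_on_def by blast
    then show "A k i - w k * cnj (w i) = cnj (A i k - w i * cnj (w k))"
      by simp
  qed
  then obtain V where V: "\<And>i k. i \<in> J \<Longrightarrow> k \<in> J \<Longrightarrow> A i k - w i * cnj (w k) = (\<Sum>r\<in>J. V r i * cnj (V r k))"
    using insert.IH psd by blast
  define V' where "V' r = (if r = a then w else (V r)(a := 0))" for r
  have "A i k = (\<Sum>r\<in>insert a J. V' r i * cnj (V' r k))"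
    if i: "i \<in> insert a J" and k: "k \<in> insert a J" for i k
  proof -
    have "(\<Sum>r\<in>J. V' r i * cnj (V' r k)) = (\<Sum>r\<in>J. ((V r)(a := 0)) i * cnj (((V r)(a := 0)) k))"
      using insert.hyps(2) by (intro sum.cong) (auto simp: V'_def)
    then have sum: "(\<Sum>r\<in>insert a J. V' r i * cnj (V' r k))
        = w i * cnj (w k) + (\<Sum>r\<in>J. ((V r)(a := 0)) i * cnj (((V r)(a := 0)) k))"
      using insert.hyps by (simp add: V'_def)
    show ?thesis
    proof (cases "i = a \<or> k = a")
      case True
      then show ?thesis unfolding sum using w[OF i k] by auto
    next
      case False
      then show ?thesis unfolding sum using V[of i k] i k by (simp add: algebra_simps)
    qed
  qed
  then show ?case by blast
qed simp

section \<open>Product vectors and separable states\<close>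

lemma gfun_eq_trace_prod: "gfun ns m G x = Re (trace_prod_on (MI ns m) G (outer (tensor_vec m x)))"
  by (simp add: gfun_eq_quad_form quad_form_on_eq_trace_prod)

lemma sum_MI_tensor_vec_sq:
  "(\<Sum>i\<in>MI ns m. (cmod (tensor_vec m x i))\<^sup>2) = (\<Prod>j<m. \<Sum>k<ns j. (cmod (x j k))\<^sup>2)"
proof -
  have "(\<Sum>i\<in>MI ns m. (cmod (tensor_vec m x i))\<^sup>2) = (\<Sum>i\<in>MI ns m. \<Prod>j<m. (cmod (x j (i j)))\<^sup>2)"
    by (simp add: tensor_vec_def prod_norm[symmetric] prod_power_distrib)
  also have "\<dots> = (\<Prod>j<m. \<Sum>k<ns j. (cmod (x j k))\<^sup>2)"
    by (rule sum_MI_prod)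
  finally show ?thesis .
qed

lemma trace_outer_tensor_vec:
  assumes "x \<in> Omega ns m"
  shows "trace_on (MI ns m) (outer (tensor_vec m x)) = 1"
  using assms by (simp add: trace_on_outer sum_MI_tensor_vec_sq Omega_def)

lemma gfun_scale:
  assumes "\<And>i. i \<in> MI ns m \<Longrightarrow> tensor_vec m y i = of_real c * tensor_vec m x i"
  shows "gfun ns m H y = c\<^sup>2 * gfun ns m H x"
proof -
  have "quad_form_on (MI ns m) H (tensor_vec m y)
      = of_real (c\<^sup>2) * quad_form_on (MI ns m) H (tensor_vec m x)"
    unfolding quad_form_on_def sum_distrib_left
    by (intro sum.cong refl) (simp add: assms power2_eq_square mult_ac)
  then show ?thesis by (simp add: gfun_eq_quad_form)
qed

lemma normalize_product_vector:
  assumes "\<And>j. j < m \<Longrightarrow> 0 < (\<Sum>k<ns j. (cmod (y j k))\<^sup>2)"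
  obtains x where "x \<in> Omega ns m"
    and "\<And>i. i \<in> MI ns m \<Longrightarrow>
      tensor_vec m y i = of_real (\<Prod>j<m. sqrt (\<Sum>k<ns j. (cmod (y j k))\<^sup>2)) * tensor_vec m x i"
proof
  define N where "N j = (\<Sum>k<ns j. (cmod (y j k))\<^sup>2)" for j
  define x where "x j k = (if j < m \<and> k < ns j then y j k / of_real (sqrt (N j)) else 0)" for j k
  have "(\<Sum>k<ns j. (cmod (x j k))\<^sup>2) = 1" if "j < m" for j
  proof -
    have "(\<Sum>k<ns j. (cmod (x j k))\<^sup>2) = (\<Sum>k<ns j. (cmod (y j k))\<^sup>2) / N j"
      unfolding sum_divide_distrib using assms[OF that] that
      by (intro sum.cong) (auto simp: x_def N_def norm_divide power_divide)
    then show ?thesis using assms[OF that] by (simp add: N_def)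
  qed
  then show "x \<in> Omega ns m"
    by (auto simp: Omega_def x_def)
  fix i assume "i \<in> MI ns m"
  then have "y j (i j) = of_real (sqrt (N j)) * x j (i j)" if "j < m" for j
    using assms[OF that] that by (simp add: x_def MI_def N_def)
  then show "tensor_vec m y i = of_real (\<Prod>j<m. sqrt (N j)) * tensor_vec m x i"
    by (simp add: tensor_vec_def prod.distrib)
qed

lemma gfun_le_scaled:
  assumes bound: "\<forall>x\<in>Omega ns m. gfun ns m H x \<le> s"
  shows "gfun ns m H y \<le> s * (\<Prod>j<m. \<Sum>k<ns j. (cmod (y j k))\<^sup>2)"
proof -
  define N where "N j = (\<Sum>k<ns j. (cmod (y j k))\<^sup>2)" for j
  show ?thesis
  proof (cases "\<exists>j<m. N j = 0")
    case True
    then obtain j where j: "j < m" "N j = 0" by blast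
    have "tensor_vec m y i = 0" if "i \<in> MI ns m" for i
    proof -
      have "y j (i j) = 0"
        using j that by (simp add: N_def MI_def sum_nonneg_eq_0_iff)
      then show ?thesis
        unfolding tensor_vec_def using j(1) by (intro prod_zero) auto
    qed
    then have "gfun ns m H y = 0"
      by (simp add: gfun_def)
    moreover have "(\<Prod>j<m. N j) = 0"
      using j by (intro prod_zero) auto
    ultimately show ?thesis
      unfolding N_def[symmetric] by (simp del: prod_zero_iff)
  next
    case False
    then have N_pos: "0 < N j" if "j < m" for j
      using that by (metis N_def order_less_le sum_nonneg zero_le_power2)
    then obtain x where x: "x \<in> Omega ns m"
      and "\<And>i. i \<in> MI ns m \<Longrightarrow> tensor_vec m y i = of_real (\<Prod>j<m. sqrt (N j)) * tensor_vec m x i"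
      using normalize_product_vector[of m y ns] unfolding N_def by blast
    then have "gfun ns m H y = (\<Prod>j<m. sqrt (N j))\<^sup>2 * gfun ns m H x"
      by (intro gfun_scale)
    also have "(\<Prod>j<m. sqrt (N j))\<^sup>2 = (\<Prod>j<m. N j)"
      unfolding prod_power_distrib using N_pos by (intro prod.cong) (auto simp: less_imp_le)
    also have "\<dots> * gfun ns m H x \<le> (\<Prod>j<m. N j) * s"
      using bound x N_pos by (intro mult_left_mono prod_nonneg) (auto simp: less_imp_le)
    finally show ?thesis
      by (simp add: N_def mult.commute)
  qed
qed

lemma tensor_mat_factorization:
  assumes "\<And>j a b. j < m \<Longrightarrow> a < ns j \<Longrightarrow> b < ns j \<Longrightarrow> \<sigma> j a b = (\<Sum>r<ns j. V j r a * cnj (V j r b))"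
    and "i \<in> MI ns m" "l \<in> MI ns m"
  shows "tensor_mat m \<sigma> i l = (\<Sum>r\<in>PiE {..<m} (\<lambda>j. {..<ns j}). outer (tensor_vec m (\<lambda>j. V j (r j))) i l)"
proof -
  have "tensor_mat m \<sigma> i l = (\<Prod>j<m. \<Sum>r<ns j. V j r (i j) * cnj (V j r (l j)))"
    unfolding tensor_mat_def using assms by (intro prod.cong refl) (auto simp: MI_def)
  also have "\<dots> = (\<Sum>r\<in>PiE {..<m} (\<lambda>j. {..<ns j}). \<Prod>j<m. V j (r j) (i j) * cnj (V j (r j) (l j)))"
    by (rule prod_sum_PiE) auto
  finally show ?thesis
    by (simp add: outer_def tensor_vec_def prod.distrib)
qed

lemma trace_prod_product_state_le:
  assumes dens: "\<And>j. j < m \<Longrightarrow> density_on {..<ns j} (\<sigma> j)"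
    and bound: "\<forall>x\<in>Omega ns m. gfun ns m H x \<le> s"
  shows "Re (trace_prod_on (MI ns m) H (tensor_mat m \<sigma>)) \<le> s"
proof -
  have "\<forall>j<m. \<exists>V. \<forall>a\<in>{..<ns j}. \<forall>b\<in>{..<ns j}. \<sigma> j a b = (\<Sum>r\<in>{..<ns j}. V r a * cnj (V r b))"
    using dens psd_factorization[of "{..<ns _}"] unfolding density_on_def by blast
  then obtain V where V: "\<And>j a b. j < m \<Longrightarrow> a < ns j \<Longrightarrow> b < ns j \<Longrightarrow> \<sigma> j a b = (\<Sum>r<ns j. V j r a * cnj (V j r b))"
    by (metis lessThan_iff)
  define R where "R = PiE {..<m} (\<lambda>j. {..<ns j})"
  define N where "N j r = (\<Sum>a<ns j. (cmod (V j r a))\<^sup>2)" for j r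
  have N_sum: "(\<Sum>r<ns j. N j r) = 1" if "j < m" for j
  proof -
    have "1 = (\<Sum>a<ns j. \<sigma> j a a)"
      using dens[OF that] by (simp add: density_on_def trace_on_def)
    also have "\<dots> = (\<Sum>a<ns j. \<Sum>r<ns j. V j r a * cnj (V j r a))"
      using V[OF that] by simp
    also have "\<dots> = of_real (\<Sum>r<ns j. N j r)"
      unfolding N_def of_real_sum complex_norm_square by (rule sum.swap)
    finally show ?thesis
      by (metis of_real_eq_1_iff)
  qed
  have "Re (trace_prod_on (MI ns m) H (tensor_mat m \<sigma>))
      = Re (trace_prod_on (MI ns m) H (\<lambda>i l. \<Sum>r\<in>R. 1 * outer (tensor_vec m (\<lambda>j. V j (r j))) i l))"
    unfolding R_def using tensor_mat_factorization[OF V]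
    by (intro arg_cong[where f = Re] trace_prod_on_cong) simp
  also have "\<dots> = (\<Sum>r\<in>R. gfun ns m H (\<lambda>j. V j (r j)))"
    unfolding trace_prod_on_sum_right by (simp add: gfun_eq_trace_prod Re_sum)
  also have "\<dots> \<le> (\<Sum>r\<in>R. s * (\<Prod>j<m. N j (r j)))"
    unfolding N_def by (intro sum_mono gfun_le_scaled[OF bound])
  also have "\<dots> = s * (\<Prod>j<m. \<Sum>r<ns j. N j r)"
    unfolding R_def sum_distrib_left[symmetric] by (subst prod_sum_PiE) auto
  also have "\<dots> = s"
    using N_sum by simp
  finally show ?thesis .
qed

lemma trace_prod_le_if_separable:
  assumes "separable ns m \<rho>" and bound: "\<forall>x\<in>Omega ns m. gfun ns m H x \<le> s"
  shows "Re (trace_prod_on (MI ns m) H \<rho>) \<le> s"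
proof -
  obtain K :: nat and p :: "nat \<Rightarrow> real" and \<sigma> where p: "\<forall>k<K. 0 \<le> p k" "(\<Sum>k<K. p k) = 1"
    and dens: "\<forall>k<K. \<forall>j<m. density_on {..<ns j} (\<sigma> k j)"
    and \<rho>: "\<forall>i\<in>MI ns m. \<forall>l\<in>MI ns m. \<rho> i l = (\<Sum>k<K. of_real (p k) * tensor_mat m (\<sigma> k) i l)"
    using assms(1) unfolding separable_def by blast
  have "Re (trace_prod_on (MI ns m) H \<rho>)
      = (\<Sum>k<K. p k * Re (trace_prod_on (MI ns m) H (tensor_mat m (\<sigma> k))))"
    using \<rho> by (simp add: trace_prod_on_cong[of _ \<rho>] trace_prod_on_sum_right Re_sum)
  also have "\<dots> \<le> (\<Sum>k<K. p k * s)"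
    using p dens by (intro sum_mono mult_left_mono trace_prod_product_state_le[OF _ bound]) auto
  also have "\<dots> = s"
    using p by (simp add: sum_distrib_right[symmetric])
  finally show ?thesis .
qed

section \<open>Topology of the product of unit spheres\<close>

lemma continuous_on_entry: "continuous_on S (\<lambda>x :: 'i \<Rightarrow> 'j \<Rightarrow> 'c::topological_space. x j k)"
  using continuous_on_product_then_coordinatewise
    [OF continuous_on_product_then_coordinatewise[OF continuous_on_id]] .

lemma continuous_on_tensor_vec: "continuous_on S (\<lambda>x. tensor_vec m x i)"
  unfolding tensor_vec_def by (intro continuous_on_prod continuous_on_entry)

lemma continuous_on_gfun: "continuous_on S (gfun ns m G)"
  unfolding gfun_def
  by (intro continuous_on_Re continuous_on_sum continuous_on_mult continuous_on_cnj
      continuous_on_tensor_vec continuous_on_const)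

lemma compact_PiE_UNIV: "(\<And>i. compact (B i)) \<Longrightarrow> compact (PiE UNIV B)"
  for B :: "'i \<Rightarrow> 'c::topological_space set"
  using compactin_PiE[of "\<lambda>_. euclidean" UNIV B] by (simp add: euclidean_product_topology)

lemma closed_Omega: "closed (Omega ns m)"
  unfolding Omega_def
  by (intro closed_Collect_conj closed_Collect_all closed_Collect_imp open_Collect_const
      closed_Collect_eq continuous_on_sum continuous_on_power continuous_on_norm
      continuous_on_entry continuous_on_const)

lemma Omega_subset_box:
  "Omega ns m \<subseteq> PiE UNIV (\<lambda>j. PiE UNIV (\<lambda>k. if j < m \<and> k < ns j then cball 0 1 else {0}))"
proof
  fix x assume x: "x \<in> Omega ns m"
  have "cmod (x j k) \<le> 1" if "j < m" "k < ns j" for j k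
  proof -
    have "(cmod (x j k))\<^sup>2 \<le> (\<Sum>k<ns j. (cmod (x j k))\<^sup>2)"
      using that by (intro member_le_sum) auto
    also have "\<dots> = 1"
      using x that by (simp add: Omega_def)
    finally show ?thesis
      by (simp add: power_le_one_iff abs_le_square_iff)
  qed
  moreover have "x j k = 0" if "\<not> (j < m \<and> k < ns j)" for j k
    using x that unfolding Omega_def by (cases "j < m") auto
  ultimately show "x \<in> PiE UNIV (\<lambda>j. PiE UNIV (\<lambda>k. if j < m \<and> k < ns j then cball 0 1 else {0}))"
    by auto
qed

lemma compact_Omega: "compact (Omega ns m)"
proof -
  have "compact (PiE UNIV (\<lambda>j. PiE UNIV (\<lambda>k. if j < m \<and> k < ns j then cball (0::complex) 1 else {0})))"
    by (intro compact_PiE_UNIV) simp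
  then have "compact (PiE UNIV (\<lambda>j. PiE UNIV (\<lambda>k. if j < m \<and> k < ns j then cball 0 1 else {0}))
      \<inter> Omega ns m)"
    using closed_Omega by (rule compact_Int_closed)
  then show ?thesis
    using Omega_subset_box by (simp add: Int_absorb1)
qed

lemma Omega_nonempty:
  assumes "\<forall>j<m. 0 < ns j"
  shows "Omega ns m \<noteq> {}"
proof -
  have "(\<lambda>j k. if j < m \<and> k = 0 then 1 else 0) \<in> Omega ns m"
    using assms by (simp add: Omega_def if_distrib[of "\<lambda>z. (cmod z)\<^sup>2"] cong: if_cong)
  then show ?thesis by blast
qed

section \<open>Convex combinations of a compact image\<close>

definition convex_weights :: "nat \<Rightarrow> (nat \<Rightarrow> real) \<Rightarrow> bool" where
  "convex_weights K p \<longleftrightarrow> (\<forall>k<K. 0 \<le> p k) \<and> (\<Sum>k<K. p k) = 1"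

lemma exists_linear_dependence:
  fixes v :: "'k \<Rightarrow> 'c \<Rightarrow> real"
  assumes "finite F" "finite S" "card F < card S"
  shows "\<exists>\<mu>. (\<exists>k\<in>S. \<mu> k \<noteq> 0) \<and> (\<forall>c\<in>F. (\<Sum>k\<in>S. \<mu> k * v k c) = 0)"
  using assms
proof (induction F arbitrary: S v rule: finite_induct)
  case empty
  then obtain k0 where "k0 \<in> S" by fastforce
  then show ?case by (intro exI[of _ "\<lambda>k. 1"]) auto
next
  case (insert a F S v)
  show ?case
  proof (cases "\<forall>k\<in>S. v k a = 0")
    case True
    have "card F < card S"
      using insert by simp
    then obtain \<mu> where "\<exists>k\<in>S. \<mu> k \<noteq> 0" "\<forall>c\<in>F. (\<Sum>k\<in>S. \<mu> k * v k c) = 0"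
      using insert.IH[OF insert.prems(1)] by blast
    then show ?thesis using True by (intro exI[of _ \<mu>]) auto
  next
    case False
    then obtain k0 where k0: "k0 \<in> S" "v k0 a \<noteq> 0" by blast
    text \<open>Gaussian elimination of the coordinate a using the pivot k0.\<close>
    define v' where "v' k c = v k c - v k a / v k0 a * v k0 c" for k c
    have "finite (S - {k0})" "card F < card (S - {k0})"
      using insert k0 by simp_all
    then obtain \<mu>' where \<mu>': "\<exists>k\<in>S - {k0}. \<mu>' k \<noteq> 0" "\<forall>c\<in>F. (\<Sum>k\<in>S - {k0}. \<mu>' k * v' k c) = 0"
      using insert.IH by blast
    define \<mu> where "\<mu> = \<mu>'(k0 := - (\<Sum>k\<in>S - {k0}. \<mu>' k * v k a) / v k0 a)"
    have reduce: "(\<Sum>k\<in>S. \<mu> k * v k c) = (\<Sum>k\<in>S - {k0}. \<mu>' k * v' k c)" for c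
    proof -
      have "(\<Sum>k\<in>S. \<mu> k * v k c) = \<mu> k0 * v k0 c + (\<Sum>k\<in>S - {k0}. \<mu> k * v k c)"
        using k0 insert.prems(1) by (simp add: sum.remove)
      also have "(\<Sum>k\<in>S - {k0}. \<mu> k * v k c) = (\<Sum>k\<in>S - {k0}. \<mu>' k * v k c)"
        by (intro sum.cong) (auto simp: \<mu>_def)
      finally show ?thesis
        by (simp add: v'_def \<mu>_def right_diff_distrib sum_subtractf sum_distrib_right
            sum_divide_distrib mult.assoc)
    qed
    show ?thesis
    proof (intro exI[of _ \<mu>] conjI ballI)
      show "\<exists>k\<in>S. \<mu> k \<noteq> 0"
        using \<mu>'(1) by (auto simp: \<mu>_def)
    next
      fix c assume "c \<in> insert a F"
      moreover have "(\<Sum>k\<in>S - {k0}. \<mu>' k * v' k a) = 0"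
        using k0 by (simp add: v'_def)
      ultimately show "(\<Sum>k\<in>S. \<mu> k * v k c) = 0"
        using reduce \<mu>'(2) by auto
    qed
  qed
qed

text \<open>Obtained from a linear dependence after adjoining a constant coordinate.\<close>
lemma exists_affine_dependence:
  fixes v :: "'k \<Rightarrow> 'c \<Rightarrow> real"
  assumes "finite F" "finite S" "card F + 1 < card S"
  obtains \<mu> where "\<exists>k\<in>S. \<mu> k \<noteq> 0" "(\<Sum>k\<in>S. \<mu> k) = 0" "\<And>c. c \<in> F \<Longrightarrow> (\<Sum>k\<in>S. \<mu> k * v k c) = 0"
proof -
  have "\<exists>\<mu>. (\<exists>k\<in>S. \<mu> k \<noteq> 0) \<and>
      (\<forall>c\<in>insert None (Some ` F). (\<Sum>k\<in>S. \<mu> k * (case c of None \<Rightarrow> 1 | Some c \<Rightarrow> v k c)) = 0)"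
    by (rule exists_linear_dependence) (use assms in \<open>auto simp: card_image\<close>)
  then obtain \<mu> where "\<exists>k\<in>S. \<mu> k \<noteq> 0"
    and dep: "\<forall>c\<in>insert None (Some ` F). (\<Sum>k\<in>S. \<mu> k * (case c of None \<Rightarrow> 1 | Some c \<Rightarrow> v k c)) = 0"
    by blast
  then show ?thesis
    by (intro that[of \<mu>]) auto
qed

lemma exists_pos_if_sum_eq_0:
  fixes \<mu> :: "'k \<Rightarrow> real"
  assumes "finite S" "(\<Sum>k\<in>S. \<mu> k) = 0" "\<exists>k\<in>S. \<mu> k \<noteq> 0"
  shows "\<exists>k\<in>S. 0 < \<mu> k"
proof (rule ccontr)
  assume "\<not> (\<exists>k\<in>S. 0 < \<mu> k)"
  then have "\<forall>k\<in>S. - \<mu> k = 0"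
    using sum_nonneg_eq_0_iff[OF assms(1), of "\<lambda>k. - \<mu> k"] assms(2) by (force simp: sum_negf not_less)
  then show False
    using assms(3) by force
qed

lemma caratheodory_step:
  fixes v :: "'k \<Rightarrow> 'c \<Rightarrow> real"
  assumes "finite F" "finite S" "card F + 1 < card S"
    and "\<forall>k\<in>S. 0 \<le> p k" "(\<Sum>k\<in>S. p k) = 1"
  shows "\<exists>q k0. k0 \<in> S \<and> q k0 = 0 \<and> (\<forall>k\<in>S. 0 \<le> q k) \<and> (\<Sum>k\<in>S. q k) = 1 \<and>
     (\<forall>c\<in>F. (\<Sum>k\<in>S. q k * v k c) = (\<Sum>k\<in>S. p k * v k c))"
proof -
  obtain \<mu> where \<mu>: "\<exists>k\<in>S. \<mu> k \<noteq> 0" and sum_\<mu>: "(\<Sum>k\<in>S. \<mu> k) = 0"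
    and dep_F: "\<And>c. c \<in> F \<Longrightarrow> (\<Sum>k\<in>S. \<mu> k * v k c) = 0"
    using exists_affine_dependence[OF assms(1-3)] by blast
  define P where "P = {k\<in>S. 0 < \<mu> k}"
  have "P \<noteq> {}"
    using exists_pos_if_sum_eq_0[OF assms(2) sum_\<mu> \<mu>] by (auto simp: P_def)
  have "finite P" using assms(2) by (simp add: P_def)
  text \<open>Move along the dependence until the first weight hits zero.\<close>
  define k0 where "k0 = arg_min_on (\<lambda>k. p k / \<mu> k) P"
  have k0: "k0 \<in> P" "\<And>k. k \<in> P \<Longrightarrow> p k0 / \<mu> k0 \<le> p k / \<mu> k"
    using arg_min_if_finite[OF \<open>finite P\<close> \<open>P \<noteq> {}\<close>, of "\<lambda>k. p k / \<mu> k"]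
    by (auto simp: k0_def not_less)
  define t where "t = p k0 / \<mu> k0"
  have "0 \<le> t" using k0 assms(4) by (simp add: t_def P_def)
  show ?thesis
  proof (intro exI[of _ "\<lambda>k. p k - t * \<mu> k"] exI[of _ k0] conjI ballI)
    show "k0 \<in> S" "p k0 - t * \<mu> k0 = 0"
      using k0 by (simp_all add: t_def P_def)
  next
    fix k assume k: "k \<in> S"
    show "0 \<le> p k - t * \<mu> k"
    proof (cases "0 < \<mu> k")
      case True
      then show ?thesis
        using k0(2)[of k] k by (simp add: t_def P_def le_divide_eq)
    next
      case False
      then have "t * \<mu> k \<le> 0"
        using \<open>0 \<le> t\<close> by (simp add: mult_nonneg_nonpos)
      then show ?thesis
        using assms(4) k by fastforce
    qed
  next
    show "(\<Sum>k\<in>S. p k - t * \<mu> k) = 1"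
      using assms(5) sum_\<mu> by (simp add: sum_subtractf sum_distrib_left[symmetric])
  next
    fix c assume "c \<in> F"
    then show "(\<Sum>k\<in>S. (p k - t * \<mu> k) * v k c) = (\<Sum>k\<in>S. p k * v k c)"
      using dep_F by (simp add: left_diff_distrib sum_subtractf sum_distrib_left[symmetric] mult.assoc)
  qed
qed

lemma sum_transpose_drop_zero:
  fixes g :: "nat \<Rightarrow> 'b::comm_monoid_add"
  assumes "k0 \<le> n" "g k0 = 0"
  shows "(\<Sum>k<n. g (Transposition.transpose k0 n k)) = (\<Sum>k<Suc n. g k)"
proof -
  have "(\<Sum>k<Suc n. g k) = (\<Sum>k<Suc n. g (Transposition.transpose k0 n k))"
    by (rule sum.reindex_bij_betw[symmetric]) (use assms(1) in simp)
  also have "\<dots> = (\<Sum>k<n. g (Transposition.transpose k0 n k))"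
    using assms(2) by simp
  finally show ?thesis ..
qed

lemma convex_combination_pad:
  assumes "convex_weights N p" "\<forall>k<N. X k \<in> A" "N \<le> K"
  shows "\<exists>q Y. convex_weights K q \<and> (\<forall>k<K. Y k \<in> A) \<and>
           (\<forall>c. (\<Sum>k<K. q k * v (Y k) c) = (\<Sum>k<N. p k * v (X k) c))"
proof -
  define q where "q k = (if k < N then p k else 0)" for k
  define Y where "Y k = (if k < N then X k else X 0)" for k
  have pad: "(\<Sum>k<K. f k) = (\<Sum>k<N. f k)" if "\<And>k. N \<le> k \<Longrightarrow> f k = 0" for f :: "nat \<Rightarrow> real"
    using assms(3) that by (intro sum.mono_neutral_right) auto
  have "0 < N"
    using assms(1) by (cases N) (auto simp: convex_weights_def)
  have "(\<Sum>k<K. q k) = (\<Sum>k<N. p k)"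
    by (subst pad) (simp_all add: q_def)
  then have "convex_weights K q"
    using assms(1) unfolding convex_weights_def by (simp add: q_def)
  moreover have "\<forall>k<K. Y k \<in> A"
    using assms(2) \<open>0 < N\<close> by (simp add: Y_def)
  moreover have "(\<Sum>k<K. q k * v (Y k) c) = (\<Sum>k<N. p k * v (X k) c)" for c
    by (subst pad) (simp_all add: q_def Y_def)
  ultimately show ?thesis
    by blast
qed

lemma caratheodory_drop_one:
  fixes v :: "'a \<Rightarrow> 'c \<Rightarrow> real"
  assumes "finite F" "card F + 1 < Suc n" "convex_weights (Suc n) p"
  shows "\<exists>q \<tau>. convex_weights n q \<and> (\<forall>k<n. \<tau> k < Suc n) \<and>
           (\<forall>c\<in>F. (\<Sum>k<n. q k * v (X (\<tau> k)) c) = (\<Sum>k<Suc n. p k * v (X k) c))"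
proof -
  obtain q k0 where k0: "k0 \<in> {..<Suc n}" "q k0 = 0"
    and q: "\<forall>k\<in>{..<Suc n}. 0 \<le> q k" "(\<Sum>k<Suc n. q k) = 1"
    and same: "\<forall>c\<in>F. (\<Sum>k<Suc n. q k * v (X k) c) = (\<Sum>k<Suc n. p k * v (X k) c)"
    using caratheodory_step[of F "{..<Suc n}" p "\<lambda>k. v (X k)"] assms by (auto simp: convex_weights_def)
  text \<open>Swap the vanishing weight to the last position and drop it.\<close>
  define \<tau> where "\<tau> = Transposition.transpose k0 n"
  have \<tau>: "\<tau> k < Suc n" if "k < n" for k
    using that k0(1) by (simp add: \<tau>_def Transposition.transpose_def)
  have drop: "(\<Sum>k<n. g (\<tau> k)) = (\<Sum>k<Suc n. g k)" if "g k0 = 0" for g :: "nat \<Rightarrow> real"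
    unfolding \<tau>_def using k0(1) that by (intro sum_transpose_drop_zero) auto
  have "convex_weights n (q \<circ> \<tau>)"
    using q \<tau> drop[of q] k0(2) by (auto simp: convex_weights_def)
  moreover have "(\<Sum>k<n. (q \<circ> \<tau>) k * v (X (\<tau> k)) c) = (\<Sum>k<Suc n. q k * v (X k) c)" for c
    using drop[of "\<lambda>k. q k * v (X k) c"] k0(2) by simp
  ultimately show ?thesis
    using same \<tau> by (intro exI[of _ "q \<circ> \<tau>"] exI[of _ \<tau>]) simp
qed

lemma caratheodory_reduce:
  fixes v :: "'a \<Rightarrow> 'c \<Rightarrow> real"
  assumes "finite F" "convex_weights N p" "\<forall>k<N. X k \<in> A"
  shows "\<exists>q Y. convex_weights (card F + 1) q \<and> (\<forall>k<card F + 1. Y k \<in> A) \<and>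
           (\<forall>c\<in>F. (\<Sum>k<card F + 1. q k * v (Y k) c) = (\<Sum>k<N. p k * v (X k) c))"
  using assms(2,3)
proof (induction N arbitrary: p X)
  case 0
  then show ?case by (simp add: convex_weights_def)
next
  case (Suc n)
  show ?case
  proof (cases "Suc n \<le> card F + 1")
    case True
    then show ?thesis
      using convex_combination_pad[OF Suc.prems True, of v] by blast
  next
    case False
    then obtain q \<tau> where q: "convex_weights n q" and \<tau>: "\<forall>k<n. \<tau> k < Suc n"
      and drop: "\<forall>c\<in>F. (\<Sum>k<n. q k * v (X (\<tau> k)) c) = (\<Sum>k<Suc n. p k * v (X k) c)"
      using caratheodory_drop_one[OF assms(1) _ Suc.prems(1), of v X] False by auto
    have "\<forall>k<n. (X \<circ> \<tau>) k \<in> A"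
      using Suc.prems(2) \<tau> by simp
    then obtain q' Y where q': "convex_weights (card F + 1) q'" and Y: "\<forall>k<card F + 1. Y k \<in> A"
      and val: "\<forall>c\<in>F. (\<Sum>k<card F + 1. q' k * v (Y k) c) = (\<Sum>k<n. q k * v ((X \<circ> \<tau>) k) c)"
      using Suc.IH[OF q] by blast
    have "\<forall>c\<in>F. (\<Sum>k<card F + 1. q' k * v (Y k) c) = (\<Sum>k<Suc n. p k * v (X k) c)"
      using val drop by simp
    with q' Y show ?thesis
      by blast
  qed
qed

lemma sum_squares_decrease:
  fixes W e :: "'c \<Rightarrow> real"
  assumes "(\<Sum>c\<in>F. W c * e c) < 0"
  shows "\<exists>t. 0 < t \<and> t \<le> 1 \<and> (\<Sum>c\<in>F. (W c + t * e c)\<^sup>2) < (\<Sum>c\<in>F. (W c)\<^sup>2)"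
proof -
  define d where "d = (\<Sum>c\<in>F. W c * e c)"
  define B where "B = (\<Sum>c\<in>F. (e c)\<^sup>2)"
  define t where "t = min 1 (- d / (B + 1))"
  have "0 \<le> B" unfolding B_def by (intro sum_nonneg) simp
  have "0 < - d / (B + 1)"
    using assms \<open>0 \<le> B\<close> by (intro divide_pos_pos) (simp_all add: d_def)
  then have "0 < t" by (simp add: t_def)
  have "t * B \<le> - d / (B + 1) * B"
    using \<open>0 \<le> B\<close> by (intro mult_right_mono) (simp_all add: t_def)
  also have "\<dots> < - d"
    using assms \<open>0 \<le> B\<close> by (simp add: d_def field_simps)
  finally have "t * (2 * d + t * B) < 0"
    using \<open>0 < t\<close> assms by (simp add: d_def mult_pos_neg)
  moreover have "(\<Sum>c\<in>F. (W c + t * e c)\<^sup>2) = (\<Sum>c\<in>F. (W c)\<^sup>2) + t * (2 * d + t * B)"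
    by (simp add: d_def B_def power2_eq_square algebra_simps sum.distrib sum_distrib_left)
  ultimately show ?thesis
    using \<open>0 < t\<close> by (intro exI[of _ t]) (simp add: t_def)
qed

lemma compact_padded_simplex:
  "compact (PiE UNIV (\<lambda>k. if k < K then {0..1::real} else {0}) \<inter> {p. (\<Sum>k<K. p k) = 1})"
  by (intro compact_Int_closed compact_PiE_UNIV closed_Collect_eq continuous_on_sum
      continuous_on_product_coordinates continuous_on_const) auto

lemma PiE_padded_mem:
  assumes "X \<in> PiE UNIV (\<lambda>k. if k < K then A else {x0})" "x0 \<in> A"
  shows "X k \<in> A"
proof -
  have "X k \<in> (if k < K then A else {x0})"
    using assms(1) by (rule PiE_mem) simp
  then show ?thesis
    using assms(2) by (auto split: if_splits)
qed

lemma exists_nearest_convex_combination: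
  fixes \<phi> :: "'a::topological_space \<Rightarrow> 'c \<Rightarrow> real" and z :: "'c \<Rightarrow> real"
  assumes "compact \<Omega>" "x0 \<in> \<Omega>" "0 < K" and cont: "\<And>c. c \<in> F \<Longrightarrow> continuous_on \<Omega> (\<lambda>x. \<phi> x c)"
  defines "dev \<equiv> \<lambda>p X. \<Sum>c\<in>F. ((\<Sum>k<K. p k * \<phi> (X k) c) - z c)\<^sup>2"
  shows "\<exists>p X. convex_weights K p \<and> (\<forall>k<K. X k \<in> \<Omega>) \<and>
     (\<forall>q Y. convex_weights K q \<and> (\<forall>k<K. Y k \<in> \<Omega>) \<longrightarrow> dev p X \<le> dev q Y)"
proof -
  text \<open>Weights and points beyond K are normalised, which makes the parameter space compact.\<close>
  define D where "D = PiE UNIV (\<lambda>k. if k < K then {0..1::real} else {0}) \<inter> {p. (\<Sum>k<K. p k) = 1}"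
  define XS where "XS = PiE UNIV (\<lambda>k. if k < K then \<Omega> else {x0})"
  have XS_in: "X k \<in> \<Omega>" if "X \<in> XS" for X k
    using PiE_padded_mem that assms(2) unfolding XS_def by metis
  have "compact (D \<times> XS)"
    unfolding D_def XS_def using assms(1)
    by (intro compact_Times compact_padded_simplex compact_PiE_UNIV) simp
  moreover have "((\<lambda>k. if k = 0 then 1 else 0), (\<lambda>_. x0)) \<in> D \<times> XS"
    using assms(2,3) by (auto simp: D_def XS_def)
  moreover have "continuous_on (D \<times> XS) (\<lambda>pX. \<phi> (snd pX k) c)" if "c \<in> F" for k c
    using XS_in
    by (intro continuous_on_compose2[OF cont[OF that] continuous_on_product_then_coordinatewise])
      (auto intro: continuous_on_snd continuous_on_id)
  then have "continuous_on (D \<times> XS) (\<lambda>pX. dev (fst pX) (snd pX))"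
    unfolding dev_def
    by (intro continuous_on_sum continuous_on_power continuous_on_diff continuous_on_mult
        continuous_on_const
        continuous_on_product_then_coordinatewise[OF continuous_on_fst[OF continuous_on_id]])
      auto
  ultimately obtain pX where pX: "pX \<in> D \<times> XS"
    and min: "\<And>qY. qY \<in> D \<times> XS \<Longrightarrow> dev (fst pX) (snd pX) \<le> dev (fst qY) (snd qY)"
    using continuous_attains_inf[of "D \<times> XS" "\<lambda>pX. dev (fst pX) (snd pX)"] by blast
  show ?thesis
  proof (intro exI[of _ "fst pX"] exI[of _ "snd pX"] conjI allI impI)
    show "convex_weights K (fst pX)"
      using pX PiE_padded_mem[of "fst pX" K "{0..1}" 0] by (force simp: D_def convex_weights_def)
  next
    show "snd pX k \<in> \<Omega>" for k
      using pX XS_in by auto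
  next
    fix q Y assume qY: "convex_weights K q \<and> (\<forall>k<K. Y k \<in> \<Omega>)"
    define q' where "q' k = (if k < K then q k else 0)" for k
    define Y' where "Y' k = (if k < K then Y k else x0)" for k
    have "q k \<le> 1" if "k < K" for k
      using qY that member_le_sum[of k "{..<K}" q] by (auto simp: convex_weights_def)
    then have "(q', Y') \<in> D \<times> XS"
      using qY by (auto simp: D_def XS_def q'_def Y'_def convex_weights_def)
    moreover have "dev q' Y' = dev q Y"
      by (simp add: dev_def q'_def Y'_def)
    ultimately show "dev (fst pX) (snd pX) \<le> dev q Y"
      using min by fastforce
  qed
qed

text \<open>The hypothesis says that the residual y - z has negative inner product with the direction
  from y towards \<phi> x. Then moving a little weight towards \<phi> x gets closer to z, and
  Caratheodory brings the number of terms back to card F + 1.\<close>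
lemma closer_convex_combination:
  fixes \<phi> :: "'a \<Rightarrow> 'c \<Rightarrow> real" and z :: "'c \<Rightarrow> real"
  assumes "finite F" "K = card F + 1" "convex_weights K p" "\<forall>k<K. X k \<in> \<Omega>" "x \<in> \<Omega>"
  defines "y \<equiv> \<lambda>c. \<Sum>k<K. p k * \<phi> (X k) c"
  assumes "(\<Sum>c\<in>F. (y c - z c) * \<phi> x c) < (\<Sum>c\<in>F. (y c - z c) * y c)"
  shows "\<exists>q Y. convex_weights K q \<and> (\<forall>k<K. Y k \<in> \<Omega>) \<and>
    (\<Sum>c\<in>F. ((\<Sum>k<K. q k * \<phi> (Y k) c) - z c)\<^sup>2) < (\<Sum>c\<in>F. (y c - z c)\<^sup>2)"
proof -
  define W where "W c = y c - z c" for c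
  define e where "e c = \<phi> x c - y c" for c
  have "(\<Sum>c\<in>F. W c * e c) < 0"
    using assms(7) by (simp add: W_def e_def right_diff_distrib sum_subtractf)
  then obtain t where t: "0 < t" "t \<le> 1" and closer: "(\<Sum>c\<in>F. (W c + t * e c)\<^sup>2) < (\<Sum>c\<in>F. (W c)\<^sup>2)"
    using sum_squares_decrease by blast
  define p' where "p' k = (if k < K then (1 - t) * p k else t)" for k
  define X' where "X' = X(K := x)"
  have "convex_weights (Suc K) p'"
    using assms(3) t by (auto simp: convex_weights_def p'_def sum_distrib_left[symmetric])
  moreover have "\<forall>k<Suc K. X' k \<in> \<Omega>"
    using assms(4,5) by (auto simp: X'_def less_Suc_eq)
  ultimately obtain q Y where q: "convex_weights K q" and Y: "\<forall>k<K. Y k \<in> \<Omega>"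
    and same: "\<forall>c\<in>F. (\<Sum>k<K. q k * \<phi> (Y k) c) = (\<Sum>k<Suc K. p' k * \<phi> (X' k) c)"
    using caratheodory_reduce[OF assms(1), of "Suc K" p' X' \<Omega> \<phi>] assms(2) by auto
  have "(\<Sum>k<Suc K. p' k * \<phi> (X' k) c) = z c + (W c + t * e c)" for c
  proof -
    have "(\<Sum>k<K. p' k * \<phi> (X' k) c) = (1 - t) * y c"
      unfolding y_def sum_distrib_left by (intro sum.cong) (auto simp: p'_def X'_def)
    then show ?thesis
      by (simp add: p'_def X'_def W_def e_def algebra_simps)
  qed
  then have "(\<Sum>c\<in>F. ((\<Sum>k<K. q k * \<phi> (Y k) c) - z c)\<^sup>2) = (\<Sum>c\<in>F. (W c + t * e c)\<^sup>2)"
    using same by simp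
  with q Y closer show ?thesis
    unfolding W_def by (intro exI[of _ q] exI[of _ Y]) simp
qed

text \<open>The nearest convex combination with card F + 1 terms is exact: otherwise the hyperplane
  through it orthogonal to the residual separates it from z, so it is violated at some \<phi> x.\<close>
lemma convex_combination_if_valid_inequalities:
  fixes \<phi> :: "'a::topological_space \<Rightarrow> 'c \<Rightarrow> real" and z :: "'c \<Rightarrow> real"
  assumes "compact \<Omega>" "\<Omega> \<noteq> {}" "finite F" "\<And>c. c \<in> F \<Longrightarrow> continuous_on \<Omega> (\<lambda>x. \<phi> x c)"
    and valid: "\<And>w b. \<forall>x\<in>\<Omega>. b \<le> (\<Sum>c\<in>F. w c * \<phi> x c) \<Longrightarrow> b \<le> (\<Sum>c\<in>F. w c * z c)"
  shows "\<exists>K p X. convex_weights K p \<and> (\<forall>k<K. X k \<in> \<Omega>) \<and> (\<forall>c\<in>F. z c = (\<Sum>k<K. p k * \<phi> (X k) c))"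
proof -
  define K where "K = card F + 1"
  obtain x0 where "x0 \<in> \<Omega>" using assms(2) by blast
  have "0 < K" by (simp add: K_def)
  obtain p X where p: "convex_weights K p" and X: "\<forall>k<K. X k \<in> \<Omega>"
    and nearest: "\<And>q Y. convex_weights K q \<Longrightarrow> \<forall>k<K. Y k \<in> \<Omega> \<Longrightarrow>
       (\<Sum>c\<in>F. ((\<Sum>k<K. p k * \<phi> (X k) c) - z c)\<^sup>2) \<le> (\<Sum>c\<in>F. ((\<Sum>k<K. q k * \<phi> (Y k) c) - z c)\<^sup>2)"
    using exists_nearest_convex_combination[OF assms(1) \<open>x0 \<in> \<Omega>\<close> \<open>0 < K\<close>, of F \<phi> z] assms(4)
    by blast
  define y where "y c = (\<Sum>k<K. p k * \<phi> (X k) c)" for c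
  show ?thesis
  proof (cases "\<forall>c\<in>F. y c = z c")
    case True
    then show ?thesis
      using p X by (metis y_def)
  next
    case False
    then have "0 < (\<Sum>c\<in>F. (y c - z c)\<^sup>2)"
      using assms(3) by (auto intro: sum_pos2)
    moreover have "(\<Sum>c\<in>F. (y c - z c) * z c) = (\<Sum>c\<in>F. (y c - z c) * y c) - (\<Sum>c\<in>F. (y c - z c)\<^sup>2)"
      unfolding sum_subtractf[symmetric] by (intro sum.cong refl) (simp add: power2_eq_square algebra_simps)
    ultimately obtain x where "x \<in> \<Omega>" "(\<Sum>c\<in>F. (y c - z c) * \<phi> x c) < (\<Sum>c\<in>F. (y c - z c) * y c)"
      using valid[of "\<Sum>c\<in>F. (y c - z c) * y c" "\<lambda>c. y c - z c"] by (force simp: not_le)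
    then show ?thesis
      using closer_convex_combination[OF assms(3) K_def p X, where x = x and z = z] nearest
      unfolding y_def by (meson not_le)
  qed
qed

section \<open>Separability criterion\<close>

definition matrix_coord :: "('i \<Rightarrow> 'i \<Rightarrow> complex) \<Rightarrow> 'i \<times> 'i \<times> bool \<Rightarrow> real" where
  "matrix_coord M = (\<lambda>(i, l, b). if b then Re (M i l) else Im (M i l))"

lemma hermitian_on_outer: "hermitian_on I (outer v)"
  by (simp add: hermitian_on_def outer_def)

lemma hermitian_representation:
  fixes w :: "'i \<times> 'i \<times> bool \<Rightarrow> real"
  assumes "finite I"
  obtains W where "hermitian_on I W"
    and "\<And>M. hermitian_on I M \<Longrightarrow> Re (trace_prod_on I W M) = (\<Sum>c\<in>I \<times> I \<times> UNIV. w c * matrix_coord M c)"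
proof
  define A where "A i l = of_real (w (i, l, True)) - \<i> * of_real (w (i, l, False))" for i l
  show "hermitian_on I (\<lambda>i l. (A l i + cnj (A i l)) / 2)"
    by (simp add: hermitian_on_def)
  fix M assume herm: "hermitian_on I M"
  define S where "S = (\<Sum>i\<in>I. \<Sum>l\<in>I. A i l * M i l)"
  have "(\<Sum>c\<in>I \<times> I \<times> UNIV. w c * matrix_coord M c)
      = (\<Sum>i\<in>I. \<Sum>l\<in>I. \<Sum>b\<in>UNIV. w (i, l, b) * matrix_coord M (i, l, b))"
    by (simp add: sum.cartesian_product)
  also have "\<dots> = (\<Sum>i\<in>I. \<Sum>l\<in>I. w (i, l, True) * Re (M i l) + w (i, l, False) * Im (M i l))"
    by (simp add: UNIV_bool matrix_coord_def add.commute)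
  also have "\<dots> = Re S"
    by (simp add: S_def A_def Re_sum)
  finally have coords: "(\<Sum>c\<in>I \<times> I \<times> UNIV. w c * matrix_coord M c) = Re S" .
  have "(\<Sum>i\<in>I. \<Sum>l\<in>I. cnj (A i l) * M l i) = cnj S"
    unfolding S_def cnj_sum
  proof (intro sum.cong refl)
    fix i l assume "i \<in> I" "l \<in> I"
    then have "M l i = cnj (M i l)"
      using herm unfolding hermitian_on_def by blast
    then show "cnj (A i l) * M l i = cnj (A i l * M i l)"
      by simp
  qed
  moreover have "(\<Sum>i\<in>I. \<Sum>l\<in>I. A l i * M l i) = S"
    unfolding S_def by (rule sum.swap)
  ultimately have tr: "trace_prod_on I (\<lambda>i l. (A l i + cnj (A i l)) / 2) M = (S + cnj S) / 2"
    by (simp add: trace_prod_on_def distrib_right sum.distrib sum_divide_distrib[symmetric]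
        add_divide_distrib)
  then show "Re (trace_prod_on I (\<lambda>i l. (A l i + cnj (A i l)) / 2) M)
      = (\<Sum>c\<in>I \<times> I \<times> UNIV. w c * matrix_coord M c)"
    unfolding tr coords by simp
qed

lemma separable_if_mixture_of_product_vectors:
  assumes "convex_weights K p" "\<forall>k<K. X k \<in> Omega ns m"
    and "\<forall>i\<in>MI ns m. \<forall>l\<in>MI ns m. \<rho> i l = (\<Sum>k<K. of_real (p k) * outer (tensor_vec m (X k)) i l)"
  shows "separable ns m \<rho>"
  unfolding separable_def
proof (intro exI conjI)
  show "\<forall>k<K. \<forall>j<m. density_on {..<ns j} (outer (X k j))"
    using assms(2) by (auto simp: Omega_def intro: density_on_outer)
  have "tensor_mat m (\<lambda>j. outer (X k j)) = outer (tensor_vec m (X k))" for k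
    by (simp add: fun_eq_iff tensor_mat_def outer_def tensor_vec_def prod.distrib)
  then show "\<forall>i\<in>MI ns m. \<forall>l\<in>MI ns m.
      \<rho> i l = (\<Sum>k<K. of_real (p k) * tensor_mat m (\<lambda>j. outer (X k j)) i l)"
    using assms(3) by simp
qed (use assms(1) in \<open>auto simp: convex_weights_def\<close>)

lemma continuous_on_matrix_coord_outer:
  "continuous_on S (\<lambda>x. matrix_coord (outer (tensor_vec m x)) c)"
proof -
  have "continuous_on S (\<lambda>x. outer (tensor_vec m x) i l)" for i l
    unfolding outer_def by (intro continuous_on_mult continuous_on_cnj continuous_on_tensor_vec)
  moreover obtain i l b where "c = (i, l, b)"
    by (cases c) auto
  ultimately show ?thesis
    by (cases b) (simp_all add: matrix_coord_def continuous_on_Re continuous_on_Im)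
qed

text \<open>An affine inequality in the real coordinates of matrix_coord is the pairing with a
  Hermitian matrix shifted by a multiple of the identity; on the unit product states the shift
  is constant, since their trace is 1.\<close>
lemma valid_inequality_at_density:
  assumes dens: "density_on (MI ns m) \<rho>"
    and dual: "\<And>W. hermitian_on (MI ns m) W \<Longrightarrow> \<forall>x\<in>Omega ns m. 0 \<le> gfun ns m W x \<Longrightarrow>
      0 \<le> Re (trace_prod_on (MI ns m) W \<rho>)"
    and bound: "\<forall>x\<in>Omega ns m.
      b \<le> (\<Sum>c\<in>MI ns m \<times> MI ns m \<times> UNIV. w c * matrix_coord (outer (tensor_vec m x)) c)"
  shows "b \<le> (\<Sum>c\<in>MI ns m \<times> MI ns m \<times> UNIV. w c * matrix_coord \<rho> c)"
proof -
  obtain W where herm: "hermitian_on (MI ns m) W" and rep: "\<And>M. hermitian_on (MI ns m) M \<Longrightarrow>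
      Re (trace_prod_on (MI ns m) W M) = (\<Sum>c\<in>MI ns m \<times> MI ns m \<times> UNIV. w c * matrix_coord M c)"
    using hermitian_representation[OF finite_MI] by blast
  define W' where "W' i l = W i l - (if i = l then of_real b else 0)" for i l
  have tr: "Re (trace_prod_on (MI ns m) W' M)
      = (\<Sum>c\<in>MI ns m \<times> MI ns m \<times> UNIV. w c * matrix_coord M c) - b * Re (trace_on (MI ns m) M)"
    if "hermitian_on (MI ns m) M" for M
    unfolding W'_def trace_prod_on_diff_scalar[OF finite_MI] using rep[OF that] by simp
  have "hermitian_on (MI ns m) W'"
    unfolding hermitian_on_def
  proof (intro ballI)
    fix i k assume "i \<in> MI ns m" "k \<in> MI ns m"
    then have "W k i = cnj (W i k)"
      using herm unfolding hermitian_on_def by blast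
    then show "W' k i = cnj (W' i k)"
      by (simp add: W'_def)
  qed
  moreover have "0 \<le> gfun ns m W' x" if "x \<in> Omega ns m" for x
    using bound that tr[OF hermitian_on_outer] trace_outer_tensor_vec[OF that]
    by (simp add: gfun_eq_trace_prod)
  ultimately have "0 \<le> Re (trace_prod_on (MI ns m) W' \<rho>)"
    by (rule dual[rule_format])
  moreover have "hermitian_on (MI ns m) \<rho>" "trace_on (MI ns m) \<rho> = 1"
    using dens unfolding density_on_def by blast+
  ultimately show ?thesis
    using tr by simp
qed

text \<open>In the real coordinates of matrix_coord, \<rho> satisfies every affine inequality valid on
  the product states, so it is a convex combination of them.\<close>
theorem separable_if_trace_prod_nonneg:
  assumes ns: "\<forall>j<m. 0 < ns j" and dens: "density_on (MI ns m) \<rho>"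
    and dual: "\<And>W. hermitian_on (MI ns m) W \<Longrightarrow> \<forall>x\<in>Omega ns m. 0 \<le> gfun ns m W x \<Longrightarrow>
      0 \<le> Re (trace_prod_on (MI ns m) W \<rho>)"
  shows "separable ns m \<rho>"
proof -
  define F where "F = MI ns m \<times> MI ns m \<times> (UNIV :: bool set)"
  have "\<exists>K p X. convex_weights K p \<and> (\<forall>k<K. X k \<in> Omega ns m) \<and>
      (\<forall>c\<in>F. matrix_coord \<rho> c = (\<Sum>k<K. p k * matrix_coord (outer (tensor_vec m (X k))) c))"
    using valid_inequality_at_density[OF dens dual] continuous_on_matrix_coord_outer finite_MI
    unfolding F_def
    by (intro convex_combination_if_valid_inequalities[OF compact_Omega Omega_nonempty[OF ns]]) auto
  then obtain K p X where p: "convex_weights K p" and X: "\<forall>k<K. X k \<in> Omega ns m"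
    and coords: "\<forall>c\<in>F. matrix_coord \<rho> c = (\<Sum>k<K. p k * matrix_coord (outer (tensor_vec m (X k))) c)"
    by blast
  have "\<rho> i l = (\<Sum>k<K. of_real (p k) * outer (tensor_vec m (X k)) i l)"
    if "i \<in> MI ns m" "l \<in> MI ns m" for i l
  proof -
    have "(i, l, True) \<in> F" "(i, l, False) \<in> F"
      using that by (simp_all add: F_def)
    then show ?thesis
      using coords by (fastforce simp: matrix_coord_def complex_eq_iff Re_sum Im_sum)
  qed
  then show ?thesis
    by (intro separable_if_mixture_of_product_vectors[OF p X]) blast
qed

section \<open>Coherence of the cone\<close>

lemma Cset_eq:
  "Cset ns m \<rho> = {gfun ns m G | G. hermitian_on (MI ns m) G \<and> 0 \<le> Re (trace_prod_on (MI ns m) G \<rho>)}"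
  by (simp add: Cset_def trace_prod_on_def)

lemma posi_on_base: "g \<in> S \<Longrightarrow> g \<in> posi_on \<Omega> S"
  unfolding posi_on_def by (intro CollectI exI[of _ "1::nat"] exI[of _ "\<lambda>_. 1"] exI[of _ "\<lambda>_. g"]) auto

lemma generator_between_gfun_and_bound:
  assumes "h \<in> Cset ns m \<rho> \<union> Lge ns m"
  shows "\<exists>G B. 0 \<le> Re (trace_prod_on (MI ns m) G \<rho>) \<and> (\<forall>x\<in>Omega ns m. gfun ns m G x \<le> h x \<and> h x \<le> B)"
  using assms
proof
  assume "h \<in> Cset ns m \<rho>"
  then obtain G where G: "h = gfun ns m G" "0 \<le> Re (trace_prod_on (MI ns m) G \<rho>)"
    unfolding Cset_eq by blast
  have "bounded (gfun ns m G ` Omega ns m)"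
    by (intro compact_imp_bounded compact_continuous_image continuous_on_gfun compact_Omega)
  then obtain B where "\<forall>x\<in>Omega ns m. gfun ns m G x \<le> B"
    unfolding bounded_real by (meson abs_le_D1 image_eqI)
  with G show ?thesis by auto
next
  assume "h \<in> Lge ns m"
  then have bdd: "bounded (h ` Omega ns m)" and inf: "0 \<le> (INF x\<in>Omega ns m. h x)"
    unfolding Lge_def by auto
  then obtain B where "\<forall>x\<in>Omega ns m. h x \<le> B"
    unfolding bounded_real by (meson abs_le_D1 image_eqI)
  moreover have "0 \<le> h x" if "x \<in> Omega ns m" for x
    using inf cINF_lower[OF bounded_imp_bdd_below[OF bdd] that] by linarith
  ultimately show ?thesis
    by (intro exI[of _ "\<lambda>i l. 0"] exI[of _ B]) (simp add: gfun_def trace_prod_on_def)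
qed

lemma posi_above_gfun:
  assumes "f \<in> posi_on (Omega ns m) (Cset ns m \<rho> \<union> Lge ns m)"
  shows "\<exists>G. 0 \<le> Re (trace_prod_on (MI ns m) G \<rho>) \<and> (\<forall>x\<in>Omega ns m. gfun ns m G x \<le> f x) \<and>
    bdd_above (f ` Omega ns m)"
proof -
  obtain N :: nat and c h where ch: "\<forall>k<N. 0 \<le> c k \<and> h k \<in> Cset ns m \<rho> \<union> Lge ns m"
    and f: "\<forall>x\<in>Omega ns m. f x = (\<Sum>k<N. c k * h k x)"
    using assms unfolding posi_on_def by blast
  have "\<forall>k\<in>{..<N}. \<exists>GB. 0 \<le> Re (trace_prod_on (MI ns m) (fst GB) \<rho>) \<and>
      (\<forall>x\<in>Omega ns m. gfun ns m (fst GB) x \<le> h k x \<and> h k x \<le> snd GB)"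
    using ch generator_between_gfun_and_bound by fastforce
  then obtain GB where GB: "\<And>k. k < N \<Longrightarrow> 0 \<le> Re (trace_prod_on (MI ns m) (fst (GB k)) \<rho>)"
    "\<And>k x. k < N \<Longrightarrow> x \<in> Omega ns m \<Longrightarrow> gfun ns m (fst (GB k)) x \<le> h k x \<and> h k x \<le> snd (GB k)"
    by (metis lessThan_iff bchoice)
  define G where "G i l = (\<Sum>k<N. of_real (c k) * fst (GB k) i l)" for i l
  have "0 \<le> Re (trace_prod_on (MI ns m) G \<rho>)"
    unfolding G_def trace_prod_on_sum_left using ch GB(1)
    by (auto simp: Re_sum intro!: sum_nonneg mult_nonneg_nonneg)
  moreover have "gfun ns m G x \<le> f x" if "x \<in> Omega ns m" for x
    unfolding G_def gfun_sum f[rule_format, OF that]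
    using ch GB(2)[OF _ that] by (intro sum_mono mult_left_mono) auto
  moreover have "bdd_above (f ` Omega ns m)"
  proof (rule bdd_aboveI2)
    show "f x \<le> (\<Sum>k<N. c k * snd (GB k))" if "x \<in> Omega ns m" for x
      unfolding f[rule_format, OF that]
      using ch GB(2)[OF _ that] by (intro sum_mono mult_left_mono) auto
  qed
  ultimately show ?thesis
    by blast
qed

lemma not_separable_if_incoherent:
  assumes "f \<in> posi_on (Omega ns m) (Cset ns m \<rho> \<union> Lge ns m)" "(SUP x\<in>Omega ns m. f x) < 0"
  shows "\<not> separable ns m \<rho>"
proof
  assume "separable ns m \<rho>"
  obtain G where G: "0 \<le> Re (trace_prod_on (MI ns m) G \<rho>)" "\<forall>x\<in>Omega ns m. gfun ns m G x \<le> f x"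
    and bdd: "bdd_above (f ` Omega ns m)"
    using posi_above_gfun[OF assms(1)] by blast
  have "\<forall>x\<in>Omega ns m. gfun ns m G x \<le> (SUP x\<in>Omega ns m. f x)"
    using G(2) cSUP_upper[OF _ bdd] by (fastforce intro: order_trans)
  then have "Re (trace_prod_on (MI ns m) G \<rho>) \<le> (SUP x\<in>Omega ns m. f x)"
    by (rule trace_prod_le_if_separable[OF \<open>separable ns m \<rho>\<close>])
  with G(1) assms(2) show False by linarith
qed

text \<open>If W pairs negatively with \<rho>, shifting -W by its pairing -\<delta> times the identity yields
  an element of Cset whose function is at most -\<delta> on \<Omega>.\<close>
lemma trace_prod_nonneg_if_coherent:
  assumes ns: "\<forall>j<m. 0 < ns j" and dens: "density_on (MI ns m) \<rho>"
    and coherent: "\<forall>f\<in>posi_on (Omega ns m) (Cset ns m \<rho> \<union> Lge ns m). \<not> (SUP x\<in>Omega ns m. f x) < 0"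
    and herm: "hermitian_on (MI ns m) W" and nonneg: "\<forall>x\<in>Omega ns m. 0 \<le> gfun ns m W x"
  shows "0 \<le> Re (trace_prod_on (MI ns m) W \<rho>)"
proof (rule ccontr)
  define \<delta> where "\<delta> = - Re (trace_prod_on (MI ns m) W \<rho>)"
  assume "\<not> 0 \<le> Re (trace_prod_on (MI ns m) W \<rho>)"
  then have "0 < \<delta>" by (simp add: \<delta>_def)
  define G where "G i l = - W i l - (if i = l then of_real \<delta> else 0)" for i l
  have tr_G: "trace_prod_on (MI ns m) G M
      = - trace_prod_on (MI ns m) W M - of_real \<delta> * trace_on (MI ns m) M" for M
    unfolding G_def trace_prod_on_diff_scalar[OF finite_MI] by (simp add: trace_prod_on_def sum_negf)
  have "hermitian_on (MI ns m) G"
    unfolding hermitian_on_def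
  proof (intro ballI)
    fix i k assume "i \<in> MI ns m" "k \<in> MI ns m"
    then have "W k i = cnj (W i k)"
      using herm unfolding hermitian_on_def by blast
    then show "G k i = cnj (G i k)"
      by (simp add: G_def)
  qed
  moreover have "trace_on (MI ns m) \<rho> = 1"
    using dens by (simp add: density_on_def)
  ultimately have "gfun ns m G \<in> posi_on (Omega ns m) (Cset ns m \<rho> \<union> Lge ns m)"
    by (intro posi_on_base) (auto simp: Cset_eq tr_G \<delta>_def)
  moreover have "gfun ns m G x \<le> - \<delta>" if "x \<in> Omega ns m" for x
    using nonneg that trace_outer_tensor_vec[OF that] by (simp add: gfun_eq_trace_prod tr_G)
  then have "(SUP x\<in>Omega ns m. gfun ns m G x) \<le> - \<delta>"
    using Omega_nonempty[OF ns] by (intro cSUP_least) auto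
  ultimately show False
    using coherent \<open>0 < \<delta>\<close> by fastforce
qed

lemma incoherent_if_not_separable:
  assumes "\<forall>j<m. 0 < ns j" "density_on (MI ns m) \<rho>" "\<not> separable ns m \<rho>"
  shows "\<exists>f\<in>posi_on (Omega ns m) (Cset ns m \<rho> \<union> Lge ns m). (SUP x\<in>Omega ns m. f x) < 0"
  using trace_prod_nonneg_if_coherent[OF assms(1,2)] separable_if_trace_prod_nonneg[OF assms(1,2)]
    assms(3) by blast

theorem theorem2:
  fixes ns :: "nat \<Rightarrow> nat" and m :: nat
    and \<rho> :: "(nat \<Rightarrow> nat) \<Rightarrow> (nat \<Rightarrow> nat) \<Rightarrow> complex"
  assumes "\<forall>j<m. 0 < ns j"
    and "density_on (MI ns m) \<rho>"
  shows "entangled ns m \<rho> \<longleftrightarrow>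
    (\<exists>f \<in> posi_on (Omega ns m) (Cset ns m \<rho> \<union> Lge ns m).
       (SUP x\<in>Omega ns m. f x) < 0)"
  using assms(2) incoherent_if_not_separable[OF assms] not_separable_if_incoherent
  by (auto simp: entangled_def)

end
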